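(* Let $M$ be a path-connected pre-$\Delta$-monoid with identity $e$, and let $\alpha_n,\beta_n\in\Omega(M,e)$ be null-sequences. Then $\prod_{n=1}^{\infty}(\alpha_n\cdot\beta_n)\simeq\left(\prod_{n=1}^{\infty}\alpha_n\right)\cdot\left(\prod_{n=1}^{\infty}\beta_n\right)$ by a path-homotopy whose image lies in $\mathrm{Im}\left(\prod_{n=1}^\infty\alpha_n\right)\ast\mathrm{Im}\left(\prod_{n=1}^\infty\beta_n\right)$.
   Context: A pre-$\Delta$-monoid is a space $M$ with an associative operation $\ast$ with identity $e$ such that for any continuous paths $\alpha,\beta:[0,1]\to M$, the pointwise product $t\mapsto\alpha(t)\ast\beta(t)$ is continuous. For $A,B\subseteq M$, $A\ast B=\{a\ast b\mid a\in A,b\in B\}$. $\alpha\cdot\beta$ denotes path concatenation. A sequence of loops $\alpha_n\in\Omega(M,e)$ is a null-sequence if every neighborhood of $e$ contains $\mathrm{Im}(\alpha_n)$ for all but finitely many $n$; its infinite concatenation $\prod_{n=1}^\infty\alpha_n$ is the loop equal to (a linear reparametrization of) $\alpha_n$ on $[\frac{n-1}{n},\frac{n}{n+1}]$ and sending $1$ to $e$. *)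

theory Defs
  imports "HOL-Analysis.Analysis"
begin

definition pre_delta_monoid :: "('a::topological_space \<Rightarrow> 'a \<Rightarrow> 'a) \<Rightarrow> 'a \<Rightarrow> bool" where
  "pre_delta_monoid opr e \<longleftrightarrow>
     (\<forall>x y z. opr (opr x y) z = opr x (opr y z)) \<and>
     (\<forall>x. opr e x = x \<and> opr x e = x) \<and>
     (\<forall>\<alpha> \<beta>. path \<alpha> \<and> path \<beta> \<longrightarrow> path (\<lambda>t. opr (\<alpha> t) (\<beta> t)))"

definition set_mult :: "('a \<Rightarrow> 'a \<Rightarrow> 'a) \<Rightarrow> 'a set \<Rightarrow> 'a set \<Rightarrow> 'a set" where
  "set_mult opr A B = {opr a b | a b. a \<in> A \<and> b \<in> B}"

definition loop_at :: "'a::topological_space \<Rightarrow> (real \<Rightarrow> 'a) \<Rightarrow> bool" where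
  "loop_at e \<gamma> \<longleftrightarrow> path \<gamma> \<and> pathstart \<gamma> = e \<and> pathfinish \<gamma> = e"

definition null_sequence :: "'a::topological_space \<Rightarrow> (nat \<Rightarrow> real \<Rightarrow> 'a) \<Rightarrow> bool" where
  "null_sequence e \<alpha> \<longleftrightarrow>
     (\<forall>n\<ge>1. loop_at e (\<alpha> n)) \<and>
     (\<forall>U. open U \<and> e \<in> U \<longrightarrow> (\<forall>\<^sub>F n in sequentially. path_image (\<alpha> n) \<subseteq> U))"

text \<open>Infinite concatenation prod_{n>=1} alpha_n: on [(n-1)/n, n/(n+1)] it is the linear
reparametrisation of alpha_n; 1 is sent to e.  For t in [(n-1)/n, n/(n+1)) we have
n = floor (1/(1-t)); the interval has length 1/(n(n+1)).\<close>
definition inf_concat :: "'a \<Rightarrow> (nat \<Rightarrow> real \<Rightarrow> 'a) \<Rightarrow> real \<Rightarrow> 'a" where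
  "inf_concat e \<alpha> t =
     (if t = 1 then e
      else (let n = nat \<lfloor>1 / (1 - t)\<rfloor>
            in \<alpha> n ((t - (real n - 1) / real n) * (real n * (real n + 1)))))"

end

theory Submission
  imports Defs
begin

text \<open>
  On its n-th block the loop \<open>\<alpha>\<^sub>n \<cdot> \<beta>\<^sub>n\<close> is the pointwise product of \<open>\<alpha>\<^sub>n \<circ> h\<^sub>1\<close> and
  \<open>\<beta>\<^sub>n \<circ> h\<^sub>2\<close>, where \<open>h\<^sub>1 t = min (2t) 1\<close> and \<open>h\<^sub>2 t = max (2t - 1) 0\<close>, because the other
  factor sits at the identity e. Hence, with \<open>P (x, y) = A x * B y\<close> for \<open>A = \<Prod>\<alpha>\<^sub>n\<close> and
  \<open>B = \<Prod>\<beta>\<^sub>n\<close>, the left-hand side is P composed with the path \<open>c\<^sub>0\<close> in the unit square that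
  performs \<open>h\<^sub>1, h\<^sub>2\<close> inside every block, while \<open>A \<cdot> B\<close> is P composed with \<open>c\<^sub>1 = (h\<^sub>1, h\<^sub>2)\<close>.
  Both paths run from (0,0) to (1,1) in the convex square, so they are linearly homotopic,
  and P carries that homotopy into \<open>Im A * Im B\<close>. The one delicate point is that P is
  continuous on the square although * is only continuous along paths: every convergent
  sequence of the square lies on a single path.
\<close>

section \<open>Blocks of the infinite concatenation\<close>

text \<open>The n-th factor of \<open>inf_concat\<close> occupies \<open>[block_start n, block_start (Suc n)]\<close> and is
  traversed there by \<open>block_point n\<close>; only indices \<open>n \<ge> 1\<close> matter.\<close>

definition block_start :: "nat \<Rightarrow> real" where
  "block_start n = (real n - 1) / real n"

definition block_point :: "nat \<Rightarrow> real \<Rightarrow> real" where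
  "block_point n v = block_start n + v / (real n * (real n + 1))"

lemma block_start_eq: "n \<ge> 1 \<Longrightarrow> block_start n = 1 - 1 / real n"
  by (simp add: block_start_def field_simps)

lemma block_start_0 [simp]: "block_start 0 = 0"
  by (simp add: block_start_def)

lemma block_start_less_1: "block_start n < 1"
  by (cases "n = 0") (simp_all add: block_start_eq)

lemma block_start_nonneg: "0 \<le> block_start n"
  by (cases "n = 0") (simp_all add: block_start_eq)

lemma incseq_block_start: "incseq block_start"
proof (rule incseq_SucI)
  fix n show "block_start n \<le> block_start (Suc n)"
    by (cases "n = 0") (simp_all add: block_start_eq frac_le)
qed

lemma LIMSEQ_block_start: "block_start \<longlonglongrightarrow> 1"
proof -
  have "(\<lambda>n. 1 - 1 / real n) \<longlonglongrightarrow> 1 - 0"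
    by (intro tendsto_intros lim_1_over_n)
  moreover have "\<forall>\<^sub>F n in sequentially. 1 - 1 / real n = block_start n"
    using eventually_ge_at_top[of 1] by eventually_elim (simp add: block_start_eq)
  ultimately show ?thesis by (simp add: tendsto_cong)
qed

lemma block_point_0 [simp]: "block_point n 0 = block_start n"
  by (simp add: block_point_def)

lemma block_width_pos: "n \<ge> 1 \<Longrightarrow> 0 < real n * (real n + 1)"
  by (intro mult_pos_pos) auto

lemma block_point_1: "n \<ge> 1 \<Longrightarrow> block_point n 1 = block_start (Suc n)"
  using block_width_pos[of n] by (simp add: block_point_def block_start_eq field_simps)

lemma block_point_inverse:
  "n \<ge> 1 \<Longrightarrow> block_point n ((x - block_start n) * (real n * (real n + 1))) = x"
  using block_width_pos[of n] by (simp add: block_point_def)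

lemma block_point_le_iff: "n \<ge> 1 \<Longrightarrow> block_point n v \<le> block_point n w \<longleftrightarrow> v \<le> w"
  by (simp add: block_point_def divide_le_cancel mult_less_0_iff)

lemma block_point_less_iff: "n \<ge> 1 \<Longrightarrow> block_point n v < block_point n w \<longleftrightarrow> v < w"
  by (simp add: block_point_def divide_less_cancel mult_less_0_iff)

lemma block_point_in_block_iff:
  "n \<ge> 1 \<Longrightarrow> block_point n v \<in> {block_start n..block_start (Suc n)} \<longleftrightarrow> v \<in> {0..1}"
  using block_point_le_iff[of n 0 v] block_point_le_iff[of n v 1] by (simp add: block_point_1)

lemma block_point_cover:
  assumes "t \<in> {0..<1}"
  obtains n v where "n \<ge> 1" "v \<in> {0..<1}" "t = block_point n v"
proof -
  define n where "n = nat \<lfloor>1 / (1 - t)\<rfloor>"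
  have "1 / (1 - t) \<ge> 1" using assms by (simp add: divide_simps)
  then have n: "n \<ge> 1" "real n \<le> 1 / (1 - t)" "1 / (1 - t) < real n + 1"
    unfolding n_def by linarith+
  then have "real n * (1 - t) \<le> 1" "1 < (real n + 1) * (1 - t)"
    using assms by (simp_all add: divide_simps)
  then have "block_start n \<le> t" "t < block_start (Suc n)"
    using n(1) by (simp_all add: block_start_eq field_simps)
  moreover have "block_start (Suc n) = block_start n + 1 / (real n * (real n + 1))"
    using block_point_1[OF n(1)] by (simp add: block_point_def)
  ultimately have "0 \<le> t - block_start n" "t - block_start n < 1 / (real n * (real n + 1))"
    by simp_all
  then have "(t - block_start n) * (real n * (real n + 1)) \<in> {0..<1}"
    using block_width_pos[OF n(1)] by (simp add: pos_less_divide_eq)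
  with that n(1) block_point_inverse[OF n(1)] show ?thesis by metis
qed

lemma block_index_eq:
  assumes "n \<ge> 1" "block_start n \<le> t" "t < block_start (Suc n)"
  shows "nat \<lfloor>1 / (1 - t)\<rfloor> = n"
proof -
  have t: "t < 1" using assms(3) block_start_less_1 less_trans by blast
  have "1 - 1 / real n \<le> t" "t < 1 - 1 / (real n + 1)"
    using assms by (simp_all add: block_start_eq add.commute)
  then have "real n \<le> 1 / (1 - t)" "1 / (1 - t) < real n + 1"
    using assms(1) t by (simp_all add: field_simps)
  then have "\<lfloor>1 / (1 - t)\<rfloor> = int n" by (intro floor_unique) auto
  then show ?thesis by simp
qed

lemma inf_concat_1 [simp]: "inf_concat c \<gamma> 1 = c"
  by (simp add: inf_concat_def)

lemma inf_concat_block_point: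
  assumes n: "n \<ge> 1" and v: "v \<in> {0..<1}"
  shows "inf_concat c \<gamma> (block_point n v) = \<gamma> n v"
proof -
  have "block_point n v < block_start (Suc n)"
    using block_point_less_iff[OF n, of v 1] v by (simp add: block_point_1[OF n])
  moreover have "block_start n \<le> block_point n v"
    using block_point_le_iff[OF n, of 0 v] v by simp
  ultimately have "nat \<lfloor>1 / (1 - block_point n v)\<rfloor> = n" "block_point n v \<noteq> 1"
    using block_index_eq[OF n] block_start_less_1[of "Suc n"] by auto
  with block_width_pos[OF n] n show ?thesis
    by (simp add: inf_concat_def block_point_def block_start_def)
qed

lemma inf_concat_block_point_closed:
  assumes n: "n \<ge> 1" and v: "v \<in> {0..1}"
    and joint: "pathfinish (\<gamma> n) = pathstart (\<gamma> (Suc n))"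
  shows "inf_concat c \<gamma> (block_point n v) = \<gamma> n v"
proof (cases "v = 1")
  case True
  have "inf_concat c \<gamma> (block_point (Suc n) 0) = \<gamma> (Suc n) 0"
    by (rule inf_concat_block_point) auto
  with True joint show ?thesis by (simp add: block_point_1[OF n] pathstart_def pathfinish_def)
next
  case False
  with v show ?thesis by (intro inf_concat_block_point[OF n]) auto
qed

lemma inf_concat_image_tail:
  assumes N: "N \<ge> 1"
  shows "inf_concat c \<gamma> ` {block_start N..1} \<subseteq> insert c (\<Union>n\<in>{N..}. path_image (\<gamma> n))"
proof
  fix y assume "y \<in> inf_concat c \<gamma> ` {block_start N..1}"
  then obtain t where t: "t \<in> {block_start N..1}" and y: "y = inf_concat c \<gamma> t" by blast
  show "y \<in> insert c (\<Union>n\<in>{N..}. path_image (\<gamma> n))"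
  proof (cases "t = 1")
    case False
    with t block_start_nonneg[of N] have "t \<in> {0..<1}" by auto
    then obtain n v where n: "n \<ge> 1" "v \<in> {0..<1}" "t = block_point n v"
      by (rule block_point_cover)
    have "y = \<gamma> n v"
      using y n(3) inf_concat_block_point[OF n(1,2)] by simp
    then have "y \<in> path_image (\<gamma> n)"
      using n(2) by (auto simp: path_image_def)
    moreover have "N \<le> n"
    proof (rule ccontr)
      assume "\<not> N \<le> n"
      then have "block_start (Suc n) \<le> block_start N" by (intro incseq_block_start[THEN incseqD]) simp
      moreover have "t < block_start (Suc n)"
        using n block_point_less_iff[of n v 1] by (simp add: block_point_1)
      ultimately show False using t by simp
    qed
    ultimately show ?thesis by blast
  qed (use y in simp)
qed

lemma path_image_inf_concat_subset:
  "path_image (inf_concat c \<gamma>) \<subseteq> insert c (\<Union>n\<in>{1..}. path_image (\<gamma> n))"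
  using inf_concat_image_tail[of 1 c \<gamma>] by (simp add: path_image_def block_start_def)

lemma continuous_on_inf_concat_block:
  assumes n: "n \<ge> 1" and "path (\<gamma> n)" and "pathfinish (\<gamma> n) = pathstart (\<gamma> (Suc n))"
  shows "continuous_on {block_start n..block_start (Suc n)} (inf_concat c \<gamma>)"
proof -
  define coord where "coord x = (x - block_start n) * (real n * (real n + 1))" for x
  have coord: "coord x \<in> {0..1}" if "x \<in> {block_start n..block_start (Suc n)}" for x
    using that block_point_in_block_iff[OF n, of "coord x"] block_point_inverse[OF n, of x]
    by (simp add: coord_def)
  have "continuous_on {block_start n..block_start (Suc n)} (\<gamma> n \<circ> coord)"
  proof (rule continuous_on_compose)
    show "continuous_on {block_start n..block_start (Suc n)} coord"
      unfolding coord_def by (intro continuous_intros)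
    show "continuous_on (coord ` {block_start n..block_start (Suc n)}) (\<gamma> n)"
      using \<open>path (\<gamma> n)\<close> unfolding path_def by (rule continuous_on_subset) (use coord in auto)
  qed
  moreover have "(\<gamma> n \<circ> coord) x = inf_concat c \<gamma> x" if "x \<in> {block_start n..block_start (Suc n)}" for x
    using inf_concat_block_point_closed[OF n coord[OF that] assms(3), of c] block_point_inverse[OF n]
    by (simp add: coord_def)
  ultimately show ?thesis using continuous_on_eq by blast
qed

lemma continuous_on_inf_concat_prefix:
  assumes "\<And>n. n \<ge> 1 \<Longrightarrow> path (\<gamma> n)"
    and "\<And>n. n \<ge> 1 \<Longrightarrow> pathfinish (\<gamma> n) = pathstart (\<gamma> (Suc n))"
    and "N \<ge> 1"
  shows "continuous_on {0..block_start (Suc N)} (inf_concat c \<gamma>)"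
  using \<open>N \<ge> 1\<close>
proof (induction N rule: dec_induct)
  case base
  then show ?case using continuous_on_inf_concat_block[of 1 \<gamma> c] assms by (simp add: block_start_def)
next
  case (step N)
  have "{0..block_start (Suc (Suc N))} = {0..block_start (Suc N)} \<union> {block_start (Suc N)..block_start (Suc (Suc N))}"
    using incseq_block_start[THEN incseqD, of "Suc N" "Suc (Suc N)"] block_start_nonneg[of "Suc N"] by auto
  moreover have "continuous_on {block_start (Suc N)..block_start (Suc (Suc N))} (inf_concat c \<gamma>)"
    using step(1) assms by (intro continuous_on_inf_concat_block) auto
  ultimately show ?case using step(3) by (simp add: continuous_on_closed_Un)
qed

lemma inf_concat_tendsto_1:
  assumes null: "\<And>U. open U \<Longrightarrow> c \<in> U \<Longrightarrow> \<forall>\<^sub>F n in sequentially. path_image (\<gamma> n) \<subseteq> U"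
  shows "(inf_concat c \<gamma> \<longlongrightarrow> c) (at 1 within {0..1})"
  unfolding tendsto_def
proof (intro allI impI)
  fix S assume "open S" "c \<in> S"
  then obtain N0 where N0: "\<And>n. n \<ge> N0 \<Longrightarrow> path_image (\<gamma> n) \<subseteq> S"
    using null[OF \<open>open S\<close> \<open>c \<in> S\<close>] unfolding eventually_sequentially by blast
  define N where "N = max N0 1"
  then have N: "N \<ge> 1" "\<And>n. n \<ge> N \<Longrightarrow> path_image (\<gamma> n) \<subseteq> S"
    using N0 by auto
  show "\<forall>\<^sub>F x in at 1 within {0..1}. inf_concat c \<gamma> x \<in> S"
    unfolding eventually_at_topological
  proof (intro exI conjI ballI impI)
    show "open {block_start N<..}" "1 \<in> {block_start N<..}"
      using block_start_less_1[of N] by auto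
    fix x assume "x \<in> {block_start N<..}" "x \<noteq> 1" "x \<in> {0..1}"
    then have "x \<in> {block_start N..1}" by simp
    then have "inf_concat c \<gamma> x \<in> insert c (\<Union>n\<in>{N..}. path_image (\<gamma> n))"
      by (rule inf_concat_image_tail[OF N(1), THEN subsetD, OF imageI])
    then show "inf_concat c \<gamma> x \<in> S" using N(2) \<open>c \<in> S\<close> by auto
  qed
qed

lemma path_inf_concat:
  assumes paths: "\<And>n. n \<ge> 1 \<Longrightarrow> path (\<gamma> n)"
    and joints: "\<And>n. n \<ge> 1 \<Longrightarrow> pathfinish (\<gamma> n) = pathstart (\<gamma> (Suc n))"
    and null: "\<And>U. open U \<Longrightarrow> c \<in> U \<Longrightarrow> \<forall>\<^sub>F n in sequentially. path_image (\<gamma> n) \<subseteq> U"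
  shows "path (inf_concat c \<gamma>)"
  unfolding path_def continuous_on_eq_continuous_within
proof
  fix t :: real assume t: "t \<in> {0..1}"
  show "continuous (at t within {0..1}) (inf_concat c \<gamma>)"
  proof (cases "t = 1")
    case False
    with t have "t \<in> {0..<1}" by auto
    then obtain n v where n: "n \<ge> 1" "v \<in> {0..<1}" "t = block_point n v"
      by (rule block_point_cover)
    then have "t < block_start (Suc n)"
      using block_point_less_iff[of n v 1] by (simp add: block_point_1)
    moreover have "continuous (at t within {0..block_start (Suc n)}) (inf_concat c \<gamma>)"
      using continuous_on_inf_concat_prefix[of \<gamma> n c, OF paths joints n(1)] t \<open>t < block_start (Suc n)\<close>
      by (simp add: continuous_on_eq_continuous_within)
    moreover have "at t within {0..1} = at t within {0..block_start (Suc n)}"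
      by (rule at_within_nhd[where S="{..<block_start (Suc n)}"])
        (use \<open>t < block_start (Suc n)\<close> block_start_less_1[of "Suc n"] in auto)
    ultimately show ?thesis by simp
  next
    case True
    with inf_concat_tendsto_1[OF null] show ?thesis by (simp add: continuous_within)
  qed
qed

lemma inf_concat_pointwise:
  "opr c c = c \<Longrightarrow>
     inf_concat c (\<lambda>n v. opr (\<gamma> n v) (\<delta> n v)) t = opr (inf_concat c \<gamma> t) (inf_concat c \<delta> t)"
  by (simp add: inf_concat_def Let_def)

lemma inf_concat_cong:
  assumes "\<And>n. n \<ge> 1 \<Longrightarrow> \<gamma> n = \<delta> n" and "t \<in> {0..1}"
  shows "inf_concat c \<gamma> t = inf_concat c \<delta> t"
proof (cases "t = 1")
  case False
  with assms(2) have "t \<in> {0..<1}" by auto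
  then obtain n v where "n \<ge> 1" "v \<in> {0..<1}" "t = block_point n v"
    by (rule block_point_cover)
  with assms(1) show ?thesis by (simp add: inf_concat_block_point)
qed simp

lemma path_inf_concat_null_sequence: "null_sequence e \<alpha> \<Longrightarrow> path (inf_concat e \<alpha>)"
  unfolding null_sequence_def loop_at_def by (intro path_inf_concat) auto

lemma pathstart_inf_concat: "pathstart (inf_concat c \<gamma>) = pathstart (\<gamma> 1)"
  using inf_concat_block_point[of 1 0 c \<gamma>] by (simp add: pathstart_def block_start_def)

section \<open>Pointwise products in a pre-\<open>\<Delta>\<close>-monoid\<close>

lemma continuous_on_pointwise_product:
  fixes opr :: "'a::topological_space \<Rightarrow> 'a \<Rightarrow> 'a" and \<phi> \<psi> :: "'b::real_normed_vector \<Rightarrow> 'a"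
  assumes path_opr: "\<And>\<alpha> \<beta>. path \<alpha> \<Longrightarrow> path \<beta> \<Longrightarrow> path (\<lambda>t. opr (\<alpha> t) (\<beta> t))"
    and S: "convex S" and \<phi>: "continuous_on S \<phi>" and \<psi>: "continuous_on S \<psi>"
  shows "continuous_on S (\<lambda>z. opr (\<phi> z) (\<psi> z))"
  unfolding continuous_on_eq_continuous_within
proof
  fix z assume "z \<in> S"
  \<comment> \<open>A sequence converging to z is threaded onto one path, the infinite concatenation of
      the segments between consecutive terms; along a path the product is continuous.\<close>
  show "continuous (at z within S) (\<lambda>z. opr (\<phi> z) (\<psi> z))"
  proof (rule continuous_within_sequentiallyI)
    fix u assume u: "u \<longlonglongrightarrow> z" "\<forall>n. u n \<in> S"
    define p where "p = inf_concat z (\<lambda>n. linepath (u (n - 1)) (u n))"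
    have "path p" unfolding p_def
    proof (rule path_inf_concat)
      fix U assume "open U" "z \<in> U"
      then obtain \<epsilon> where \<epsilon>: "\<epsilon> > 0" "ball z \<epsilon> \<subseteq> U" by (meson open_contains_ball)
      have "\<forall>\<^sub>F n in sequentially. u n \<in> ball z \<epsilon>"
        using u(1) \<epsilon>(1) by (rule tendstoD[THEN eventually_mono]) (simp add: dist_commute)
      then obtain N where N: "\<And>n. n \<ge> N \<Longrightarrow> u n \<in> ball z \<epsilon>"
        unfolding eventually_sequentially by blast
      have "closed_segment (u (n - 1)) (u n) \<subseteq> U" if "n \<ge> Suc N" for n
        using that N \<epsilon>(2) closed_segment_subset[of "u (n - 1)" "ball z \<epsilon>" "u n"] by force
      then show "\<forall>\<^sub>F n in sequentially. path_image (linepath (u (n - 1)) (u n)) \<subseteq> U"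
        unfolding eventually_sequentially by auto
    qed auto
    have "path_image (linepath (u (n - 1)) (u n)) \<subseteq> S" for n
      using u(2) closed_segment_subset[OF _ _ S] by simp
    then have "path_image p \<subseteq> S"
      using path_image_inf_concat_subset[of z] \<open>z \<in> S\<close> unfolding p_def by blast
    then have "path (\<phi> \<circ> p)" "path (\<psi> \<circ> p)"
      using \<open>path p\<close> continuous_on_subset[OF \<phi>] continuous_on_subset[OF \<psi>]
      by (simp_all add: path_continuous_image)
    then have "path (\<lambda>t. opr (\<phi> (p t)) (\<psi> (p t)))"
      using path_opr by (simp add: o_def)
    then have "continuous (at 1 within {0..1}) (\<lambda>t. opr (\<phi> (p t)) (\<psi> (p t)))"
      by (simp add: path_def continuous_on_eq_continuous_within)
    moreover have "block_start (Suc n) \<in> {0..1}" for n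
      using block_start_nonneg block_start_less_1 less_imp_le by auto
    moreover have "(\<lambda>n. block_start (Suc n)) \<longlonglongrightarrow> 1"
      using LIMSEQ_block_start by (rule LIMSEQ_Suc)
    ultimately have "(\<lambda>n. opr (\<phi> (p (block_start (Suc n)))) (\<psi> (p (block_start (Suc n)))))
        \<longlonglongrightarrow> opr (\<phi> (p 1)) (\<psi> (p 1))"
      by (rule continuous_within_tendsto_compose'[where f = "\<lambda>t. opr (\<phi> (p t)) (\<psi> (p t))"])
    moreover have "p (block_start (Suc n)) = u n" for n
      using inf_concat_block_point[of "Suc n" 0 z] by (simp add: p_def linepath_def)
    ultimately show "(\<lambda>n. opr (\<phi> (u n)) (\<psi> (u n))) \<longlonglongrightarrow> opr (\<phi> z) (\<psi> z)"
      by (simp add: p_def)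
  qed
qed

lemma convex_unit_square: "convex ({0..1::real} \<times> {0..1::real})"
  by (intro convex_Times) (simp_all add: convex_real_interval)

section \<open>Blockwise reparametrization\<close>

definition reparametrization :: "(real \<Rightarrow> real) \<Rightarrow> bool" where
  "reparametrization h \<longleftrightarrow> continuous_on {0..1} h \<and> h \<in> {0..1} \<rightarrow> {0..1} \<and> h 0 = 0 \<and> h 1 = 1"

text \<open>The reparametrization h performed separately inside every block.\<close>
definition block_reparam :: "(real \<Rightarrow> real) \<Rightarrow> real \<Rightarrow> real" where
  "block_reparam h = inf_concat 1 (\<lambda>n v. block_point n (h v))"

lemma block_reparam_block_point:
  assumes h: "reparametrization h" and n: "n \<ge> 1" and v: "v \<in> {0..1}"
  shows "block_reparam h (block_point n v) = block_point n (h v)"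
  unfolding block_reparam_def
proof (rule inf_concat_block_point_closed[OF n v])
  show "pathfinish (\<lambda>v. block_point n (h v)) = pathstart (\<lambda>v. block_point (Suc n) (h v))"
    using h n by (simp add: reparametrization_def pathstart_def pathfinish_def block_point_1)
qed

lemma block_reparam_0: "reparametrization h \<Longrightarrow> block_reparam h 0 = 0"
  using block_reparam_block_point[of h 1 0]
  by (simp add: reparametrization_def block_start_def)

lemma block_reparam_1: "block_reparam h 1 = 1"
  by (simp add: block_reparam_def)

lemma block_reparam_in_unit_interval:
  assumes h: "reparametrization h" and t: "t \<in> {0..1}"
  shows "block_reparam h t \<in> {0..1}"
proof (cases "t = 1")
  case False
  with t have "t \<in> {0..<1}" by auto
  then obtain n v where n: "n \<ge> 1" "v \<in> {0..<1}" "t = block_point n v"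
    by (rule block_point_cover)
  have "h v \<in> {0..1}" using h n(2) by (auto simp: reparametrization_def)
  then have "block_reparam h t \<in> {block_start n..block_start (Suc n)}"
    using block_reparam_block_point[OF h n(1)] block_point_in_block_iff[OF n(1)] n(2,3) by simp
  then show ?thesis
    using block_start_nonneg[of n] block_start_less_1[of "Suc n"] by auto
qed (simp add: block_reparam_1)

lemma path_block_reparam:
  assumes h: "reparametrization h"
  shows "path (block_reparam h)"
  unfolding block_reparam_def
proof (rule path_inf_concat)
  have block: "path_image (\<lambda>v. block_point n (h v)) \<subseteq> {block_start n..block_start (Suc n)}"
    if "n \<ge> 1" for n
    using h block_point_in_block_iff[OF that] by (auto simp: reparametrization_def path_image_def)
  show "path (\<lambda>v. block_point n (h v))" for n
    using h unfolding path_def block_point_def reparametrization_def divide_inverse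
    by (intro continuous_intros) auto
  show "pathfinish (\<lambda>v. block_point n (h v)) = pathstart (\<lambda>v. block_point (Suc n) (h v))"
    if "n \<ge> 1" for n
    using h that by (simp add: reparametrization_def pathstart_def pathfinish_def block_point_1)
  fix U :: "real set" assume "open U" "1 \<in> U"
  then obtain \<epsilon> where \<epsilon>: "\<epsilon> > 0" "ball 1 \<epsilon> \<subseteq> U" by (meson open_contains_ball)
  have "\<forall>\<^sub>F n in sequentially. dist (block_start n) 1 < \<epsilon>"
    using LIMSEQ_block_start \<epsilon>(1) by (rule tendstoD)
  moreover have "\<forall>\<^sub>F n in sequentially. n \<ge> 1" by (rule eventually_ge_at_top)
  ultimately show "\<forall>\<^sub>F n in sequentially. path_image (\<lambda>v. block_point n (h v)) \<subseteq> U"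
  proof eventually_elim
    case (elim n)
    have "{block_start n..block_start (Suc n)} \<subseteq> ball 1 \<epsilon>"
      using elim(1) block_start_less_1[of "Suc n"] by (auto simp: dist_real_def)
    then show ?case using block[OF elim(2)] \<epsilon>(2) by blast
  qed
qed

lemma inf_concat_block_reparam:
  assumes h: "reparametrization h"
    and joints: "\<And>n. n \<ge> 1 \<Longrightarrow> pathfinish (\<gamma> n) = pathstart (\<gamma> (Suc n))"
    and t: "t \<in> {0..1}"
  shows "inf_concat c \<gamma> (block_reparam h t) = inf_concat c (\<lambda>n. \<gamma> n \<circ> h) t"
proof (cases "t = 1")
  case False
  with t have "t \<in> {0..<1}" by auto
  then obtain n v where n: "n \<ge> 1" "v \<in> {0..<1}" "t = block_point n v"
    by (rule block_point_cover)
  have "h v \<in> {0..1}" using h n(2) by (auto simp: reparametrization_def)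
  then have "inf_concat c \<gamma> (block_reparam h t) = \<gamma> n (h v)"
    using block_reparam_block_point[OF h n(1)] inf_concat_block_point_closed[OF n(1) _ joints[OF n(1)]] n(2,3)
    by simp
  also have "\<dots> = inf_concat c (\<lambda>n. \<gamma> n \<circ> h) t"
    using inf_concat_block_point[OF n(1,2), of c "\<lambda>n. \<gamma> n \<circ> h"] n(3) by simp
  finally show ?thesis .
qed (simp add: block_reparam_1)

definition first_half :: "real \<Rightarrow> real" where
  "first_half t = min (2 * t) 1"

definition second_half :: "real \<Rightarrow> real" where
  "second_half t = max (2 * t - 1) 0"

lemma reparametrization_first_half: "reparametrization first_half"
  unfolding reparametrization_def first_half_def by (auto intro!: continuous_intros)

lemma reparametrization_second_half: "reparametrization second_half"
  unfolding reparametrization_def second_half_def by (auto intro!: continuous_intros)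

lemma joinpaths_eq_pointwise_product:
  assumes "\<And>x. opr e x = x" "\<And>x. opr x e = x" "pathfinish p = e" "pathstart q = e"
  shows "(p +++ q) t = opr (p (first_half t)) (q (second_half t))"
  using assms by (auto simp: joinpaths_def first_half_def second_half_def pathstart_def pathfinish_def)

lemma inf_concat_joinpaths:
  assumes unit: "\<And>x. opr e x = x" "\<And>x. opr x e = x"
    and \<alpha>: "\<And>n. n \<ge> 1 \<Longrightarrow> loop_at e (\<alpha> n)" and \<beta>: "\<And>n. n \<ge> 1 \<Longrightarrow> loop_at e (\<beta> n)"
    and t: "t \<in> {0..1}"
  shows "inf_concat e (\<lambda>n. \<alpha> n +++ \<beta> n) t =
    opr (inf_concat e \<alpha> (block_reparam first_half t)) (inf_concat e \<beta> (block_reparam second_half t))"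
proof -
  have "inf_concat e (\<lambda>n. \<alpha> n +++ \<beta> n) t =
      inf_concat e (\<lambda>n v. opr ((\<alpha> n \<circ> first_half) v) ((\<beta> n \<circ> second_half) v)) t"
  proof (rule inf_concat_cong[OF _ t])
    fix n :: nat assume "n \<ge> 1"
    with \<alpha> \<beta> have "pathfinish (\<alpha> n) = e" "pathstart (\<beta> n) = e" by (simp_all add: loop_at_def)
    then show "\<alpha> n +++ \<beta> n = (\<lambda>v. opr ((\<alpha> n \<circ> first_half) v) ((\<beta> n \<circ> second_half) v))"
      using joinpaths_eq_pointwise_product[OF unit] by (simp add: fun_eq_iff)
  qed
  also have "\<dots> = opr (inf_concat e (\<lambda>n. \<alpha> n \<circ> first_half) t) (inf_concat e (\<lambda>n. \<beta> n \<circ> second_half) t)"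
    by (rule inf_concat_pointwise) (simp add: unit)
  also have "\<dots> = opr (inf_concat e \<alpha> (block_reparam first_half t)) (inf_concat e \<beta> (block_reparam second_half t))"
    using \<alpha> \<beta> t
    by (simp add: inf_concat_block_reparam reparametrization_first_half reparametrization_second_half loop_at_def)
  finally show ?thesis .
qed

lemma homotopic_paths_block_reparam_pair:
  assumes f: "reparametrization f" and g: "reparametrization g"
  shows "homotopic_paths ({0..1} \<times> {0..1})
           (\<lambda>t. (block_reparam f t, block_reparam g t)) (\<lambda>t. (f t, g t))"
proof (rule homotopic_paths_linear)
  show "path (\<lambda>t. (block_reparam f t, block_reparam g t))"
    using path_block_reparam[OF f] path_block_reparam[OF g]
    unfolding path_def by (rule continuous_on_Pair)
  show "path (\<lambda>t. (f t, g t))"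
    using f g unfolding path_def reparametrization_def by (intro continuous_on_Pair) auto
  show "pathstart (\<lambda>t. (f t, g t)) = pathstart (\<lambda>t. (block_reparam f t, block_reparam g t))"
    "pathfinish (\<lambda>t. (f t, g t)) = pathfinish (\<lambda>t. (block_reparam f t, block_reparam g t))"
    using f g by (simp_all add: pathstart_def pathfinish_def reparametrization_def
        block_reparam_0 block_reparam_1)
  fix t :: real assume t: "t \<in> {0..1}"
  have "(block_reparam f t, block_reparam g t) \<in> {0..1} \<times> {0..1}" "(f t, g t) \<in> {0..1} \<times> {0..1}"
    using f g t block_reparam_in_unit_interval[OF f t] block_reparam_in_unit_interval[OF g t]
    by (auto simp: reparametrization_def)
  then show "closed_segment (block_reparam f t, block_reparam g t) (f t, g t) \<subseteq> {0..1} \<times> {0..1}"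
    by (intro closed_segment_subset convex_unit_square)
qed

lemma homotopic_paths_cong:
  assumes "homotopic_paths S p q"
    and "\<And>t. t \<in> {0..1} \<Longrightarrow> p t = p' t" "\<And>t. t \<in> {0..1} \<Longrightarrow> q t = q' t"
  shows "homotopic_paths S p' q'"
proof -
  have "homotopic_paths S p p'"
    using homotopic_paths_imp_path[OF assms(1)] homotopic_paths_imp_subset[OF assms(1)] assms(2)
    by (intro homotopic_paths_eq) auto
  moreover have "homotopic_paths S q q'"
    using homotopic_paths_imp_path[OF assms(1)] homotopic_paths_imp_subset[OF assms(1)] assms(3)
    by (intro homotopic_paths_eq) auto
  ultimately show ?thesis
    using assms(1) homotopic_paths_sym homotopic_paths_trans by blast
qed

lemma homotopic_paths_pointwise_product_reparam:
  fixes opr :: "'a::topological_space \<Rightarrow> 'a \<Rightarrow> 'a"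
  assumes path_opr: "\<And>\<alpha> \<beta>. path \<alpha> \<Longrightarrow> path \<beta> \<Longrightarrow> path (\<lambda>t. opr (\<alpha> t) (\<beta> t))"
    and A: "path A" and B: "path B" and f: "reparametrization f" and g: "reparametrization g"
  shows "homotopic_paths (set_mult opr (path_image A) (path_image B))
           (\<lambda>t. opr (A (block_reparam f t)) (B (block_reparam g t))) (\<lambda>t. opr (A (f t)) (B (g t)))"
proof -
  define P where "P z = opr (A (fst z)) (B (snd z))" for z
  have cont_A: "continuous_on ({0..1} \<times> {0..1}) (\<lambda>z. A (fst z))"
    using A unfolding path_def by (rule continuous_on_compose2[OF _ continuous_on_fst]) auto
  have cont_B: "continuous_on ({0..1} \<times> {0..1}) (\<lambda>z. B (snd z))"
    using B unfolding path_def by (rule continuous_on_compose2[OF _ continuous_on_snd]) auto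
  have "continuous_on ({0..1} \<times> {0..1}) P"
    unfolding P_def
    by (rule continuous_on_pointwise_product[OF _ convex_unit_square cont_A cont_B]) (rule path_opr)
  moreover have "P \<in> {0..1} \<times> {0..1} \<rightarrow> set_mult opr (path_image A) (path_image B)"
  proof
    fix z :: "real \<times> real" assume "z \<in> {0..1} \<times> {0..1}"
    then have "A (fst z) \<in> path_image A" "B (snd z) \<in> path_image B"
      by (auto simp: path_image_def)
    then show "P z \<in> set_mult opr (path_image A) (path_image B)"
      unfolding P_def set_mult_def by blast
  qed
  ultimately have "homotopic_paths (set_mult opr (path_image A) (path_image B))
      (P \<circ> (\<lambda>t. (block_reparam f t, block_reparam g t))) (P \<circ> (\<lambda>t. (f t, g t)))"
    by (rule homotopic_paths_continuous_image[OF homotopic_paths_block_reparam_pair[OF f g]])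
  then show ?thesis by (simp add: P_def o_def)
qed

theorem mainTheorem9:
  fixes opr :: "'a::topological_space \<Rightarrow> 'a \<Rightarrow> 'a" and e :: 'a
    and \<alpha> \<beta> :: "nat \<Rightarrow> real \<Rightarrow> 'a"
  assumes "pre_delta_monoid opr e"
    and "path_connected (UNIV :: 'a set)"
    and "null_sequence e \<alpha>"
    and "null_sequence e \<beta>"
  shows "homotopic_paths
           (set_mult opr (path_image (inf_concat e \<alpha>)) (path_image (inf_concat e \<beta>)))
           (inf_concat e (\<lambda>n. \<alpha> n +++ \<beta> n))
           (inf_concat e \<alpha> +++ inf_concat e \<beta>)"
proof -
  from assms(1) have path_opr: "\<And>p q. path p \<Longrightarrow> path q \<Longrightarrow> path (\<lambda>t. opr (p t) (q t))"
    and unit: "\<And>x. opr e x = x" "\<And>x. opr x e = x"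
    by (auto simp: pre_delta_monoid_def)
  from assms(3,4) have loops: "\<And>n. n \<ge> 1 \<Longrightarrow> loop_at e (\<alpha> n)" "\<And>n. n \<ge> 1 \<Longrightarrow> loop_at e (\<beta> n)"
    by (simp_all add: null_sequence_def)
  have "homotopic_paths (set_mult opr (path_image (inf_concat e \<alpha>)) (path_image (inf_concat e \<beta>)))
      (\<lambda>t. opr (inf_concat e \<alpha> (block_reparam first_half t)) (inf_concat e \<beta> (block_reparam second_half t)))
      (\<lambda>t. opr (inf_concat e \<alpha> (first_half t)) (inf_concat e \<beta> (second_half t)))"
    by (rule homotopic_paths_pointwise_product_reparam[OF _ path_inf_concat_null_sequence[OF assms(3)]
          path_inf_concat_null_sequence[OF assms(4)] reparametrization_first_half
          reparametrization_second_half]) (rule path_opr)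
  then show ?thesis
  proof (rule homotopic_paths_cong)
    show "opr (inf_concat e \<alpha> (block_reparam first_half t)) (inf_concat e \<beta> (block_reparam second_half t))
        = inf_concat e (\<lambda>n. \<alpha> n +++ \<beta> n) t" if "t \<in> {0..1}" for t
      using inf_concat_joinpaths[OF unit loops that] by simp
    have "pathfinish (inf_concat e \<alpha>) = e" "pathstart (inf_concat e \<beta>) = e"
      using loops(2)[of 1] by (simp_all add: pathfinish_def pathstart_inf_concat loop_at_def)
    then show "opr (inf_concat e \<alpha> (first_half t)) (inf_concat e \<beta> (second_half t))
        = (inf_concat e \<alpha> +++ inf_concat e \<beta>) t" for t
      by (simp add: joinpaths_eq_pointwise_product[OF unit])
  qed
qed

end
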